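(* Let $n\ge1$ and $\alpha_n\in\mathbb{C}$, and consider the equation $i\partial_tu=2\alpha_n\,\partial_x\frac{\delta}{\delta\overline{u}}\int_{\mathbb{R}}u\,Y_n\,dx$ with $r=\overline{u}$, with the right-hand side expanded as a polynomial in $u,\overline u$ and their derivatives. For $0\le k\le n$, the coefficient of the cubic term $(\partial_x^{n-k}u)\,\overline{u}\,(\partial_x^ku)$ (i.e. a cubic term with no derivative on the conjugated factor; the terms for $k$ and $n-k$ coincide) on the right-hand side is $$\frac{4(-1)^{n+1}\alpha_n}{(2i)^{n+2}}\Big(\binom{n+2}{k+1}-\delta_{0,k}-\delta_{n,k}\Big),$$ where $\delta_{a,b}$ is the Kronecker delta.
   Context: Define, for functions $q,r$, recursively $Y_0=-\frac{r}{2i}$ and $Y_{n+1}=\frac{1}{2i}\big[\partial_xY_n+q\sum_{k=0}^nY_{n-k}Y_k\big]$, and set $q=u$, $r=\overline u$. The functional derivative is $\frac{\delta}{\delta\phi}\int f(\phi,\partial_x\phi,\dots,\partial_x^N\phi)\,dx=\sum_{k=0}^N(-1)^k\partial_x^k\frac{\partial f}{\partial(\partial_x^k\phi)}$, with $u$ and $\overline u$ treated as independent variables. *)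

theory Defs
  imports Complex_Main "HOL-Library.Poly_Mapping" "HOL-Library.Multiset"
begin

text \<open>Differential polynomials in u and its conjugate (treated as independent):
  the variable U j stands for the j-th x-derivative of u, Ubar j for the j-th
  x-derivative of conj u.\<close>

datatype dvar = U nat | Ubar nat

type_synonym dpoly = "dvar multiset \<Rightarrow>\<^sub>0 complex"

fun dshift :: "dvar \<Rightarrow> dvar" where
  "dshift (U j) = U (Suc j)"
| "dshift (Ubar j) = Ubar (Suc j)"

fun dord :: "dvar \<Rightarrow> nat" where
  "dord (U j) = j"
| "dord (Ubar j) = j"

definition dconst :: "complex \<Rightarrow> dpoly" where
  "dconst c = Poly_Mapping.single {#} c"

definition dv :: "dvar \<Rightarrow> dpoly" where
  "dv v = Poly_Mapping.single {#v#} 1"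

definition Dmon :: "dvar multiset \<Rightarrow> dpoly" where
  "Dmon m = (\<Sum>v\<in>#m. Poly_Mapping.single (m - {#v#} + {#dshift v#}) 1)"

definition Dx :: "dpoly \<Rightarrow> dpoly" where
  "Dx p = (\<Sum>m\<in>Poly_Mapping.keys p. dconst (Poly_Mapping.lookup p m) * Dmon m)"

definition pdiff :: "dvar \<Rightarrow> dpoly \<Rightarrow> dpoly" where
  "pdiff v p = (\<Sum>m\<in>Poly_Mapping.keys p.
      Poly_Mapping.single (m - {#v#}) (Poly_Mapping.lookup p m * of_nat (count m v)))"

definition maxord :: "dpoly \<Rightarrow> nat" where
  "maxord p = Max (insert 0 (dord ` (\<Union>m\<in>Poly_Mapping.keys p. set_mset m)))"

definition varderiv_ubar :: "dpoly \<Rightarrow> dpoly" where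
  "varderiv_ubar f = (\<Sum>k\<le>maxord f. dconst ((-1) ^ k) * (Dx ^^ k) (pdiff (Ubar k) f))"

text \<open>The recursion for Y_n with q = u, r = conj u.\<close>
fun Y :: "nat \<Rightarrow> dpoly" where
  "Y 0 = dconst (- 1 / (2 * \<i>)) * dv (Ubar 0)"
| "Y (Suc n) = dconst (1 / (2 * \<i>)) *
      (Dx (Y n) + dv (U 0) * (\<Sum>k\<le>n. Y (n - k) * Y k))"

definition rhs :: "complex \<Rightarrow> nat \<Rightarrow> dpoly" where
  "rhs \<alpha> n = dconst (2 * \<alpha>) * Dx (varderiv_ubar (dv (U 0) * Y n))"

definition cubic_mon :: "nat \<Rightarrow> nat \<Rightarrow> dvar multiset" where
  "cubic_mon n k = {#U (n - k), Ubar 0, U k#}"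

end

theory Submission
  imports Defs
begin

(*
  Split Y n = L n + C n + R n into its linear part L n = -(2i)^-(n+1) ubar_n, its cubic part C n
  and a remainder R n all of whose monomials have degree at least 5. The variational derivative
  lowers the degree by one and d/dx preserves it, so only u * C n contributes cubic terms to the
  right-hand side. Writing C n as a sum of c a b e * u_a ubar_b ubar_e, the recursion for Y becomes
  a Pascal-type recursion for c, whose solution on the slice e = 0 is
  c a b 0 = (2i)^-(n+2) * binom(n, b) for a + b + 1 = n. The cubic terms with no derivative on the
  conjugated factor come from this slice only, and their coefficient is the alternating sum
  sum_{b<n} (-1)^b binom(n, b) (binom(b+1, n-k) + binom(b+1, k)), which is evaluated with
  sum_b (-1)^b binom(n, b) binom(b, j) = (-1)^n [j = n].
*)

section \<open>Differential polynomials\<close>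

lemma dconst_mult: "dconst a * dconst b = dconst (a * b)"
  by (simp add: dconst_def mult_single)

lemma dconst_add: "dconst (a + b) = dconst a + dconst b"
  by (simp add: dconst_def single_add)

lemma dconst_0 [simp]: "dconst 0 = 0"
  by (simp add: dconst_def)

lemma dconst_1 [simp]: "dconst 1 = 1"
  by (simp add: dconst_def)

lemma dconst_mult_single: "dconst c * Poly_Mapping.single m d = Poly_Mapping.single m (c * d)"
  by (simp add: dconst_def mult_single)

lemma dconst_if_mult: "dconst (if P then x else 0) * p = (if P then dconst x * p else 0)"
  by simp

lemma sum_single_lookup_keys:
  "(\<Sum>m\<in>Poly_Mapping.keys p. Poly_Mapping.single m (Poly_Mapping.lookup p m)) = p"
  by (rule poly_mapping_eqI) (simp add: lookup_sum lookup_single when_def in_keys_iff sum.delta)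

lemma lookup_single_mult:
  fixes p :: "'a multiset \<Rightarrow>\<^sub>0 'b::semiring_0"
  shows "Poly_Mapping.lookup (Poly_Mapping.single s c * p) m =
    (if s \<subseteq># m then c * Poly_Mapping.lookup p (m - s) else 0)"
proof -
  have "Poly_Mapping.single s c * p =
      (\<Sum>x\<in>Poly_Mapping.keys p. Poly_Mapping.single (s + x) (c * Poly_Mapping.lookup p x))"
    by (subst sum_single_lookup_keys[symmetric, of p]) (simp add: sum_distrib_left mult_single)
  then have "Poly_Mapping.lookup (Poly_Mapping.single s c * p) m =
      (\<Sum>x\<in>Poly_Mapping.keys p. if x = m - s \<and> s \<subseteq># m then c * Poly_Mapping.lookup p x else 0)"
    by (auto simp: lookup_sum lookup_single when_def intro!: sum.cong)
  then show ?thesis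
    by (cases "s \<subseteq># m") (auto simp: sum.delta in_keys_iff)
qed

lemma lookup_dconst_mult: "Poly_Mapping.lookup (dconst c * p) m = c * Poly_Mapping.lookup p m"
  by (simp add: dconst_def lookup_single_mult)

lemma lookup_dv: "Poly_Mapping.lookup (dv v) m = (if m = {#v#} then 1 else 0)"
  by (simp add: dv_def lookup_single when_def)

lemma lookup_mult_dv:
  "Poly_Mapping.lookup (p * dv v) m = (if v \<in># m then Poly_Mapping.lookup p (m - {#v#}) else 0)"
  by (simp add: dv_def mult.commute[of p] lookup_single_mult)

lemma dv_mult_dv: "dv a * dv b = Poly_Mapping.single {#a, b#} 1"
  by (simp add: dv_def mult_single add_mset_commute)

definition lin_ext :: "('a \<Rightarrow> 'b::zero \<Rightarrow> 'c::comm_monoid_add) \<Rightarrow> ('a \<Rightarrow>\<^sub>0 'b) \<Rightarrow> 'c" where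
  "lin_ext F p = (\<Sum>m\<in>Poly_Mapping.keys p. F m (Poly_Mapping.lookup p m))"

definition coeff_additive :: "('a \<Rightarrow> 'b::monoid_add \<Rightarrow> 'c::monoid_add) \<Rightarrow> bool" where
  "coeff_additive F \<longleftrightarrow> (\<forall>m. F m 0 = 0) \<and> (\<forall>m a b. F m (a + b) = F m a + F m b)"

lemma lin_ext_zero [simp]: "lin_ext F 0 = 0"
  by (simp add: lin_ext_def)

lemma lin_ext_add: "coeff_additive F \<Longrightarrow> lin_ext F (p + q) = lin_ext F p + lin_ext F q"
  unfolding lin_ext_def coeff_additive_def
  by (rule setsum_keys_plus_distrib) (auto simp: lookup_add)

lemma lin_ext_single: "coeff_additive F \<Longrightarrow> lin_ext F (Poly_Mapping.single m c) = F m c"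
  unfolding lin_ext_def coeff_additive_def by (cases "c = 0") auto

lemma lin_ext_sum: "coeff_additive F \<Longrightarrow> lin_ext F (\<Sum>i\<in>I. g i) = (\<Sum>i\<in>I. lin_ext F (g i))"
  by (induction I rule: infinite_finite_induct) (simp_all add: lin_ext_add)

lemma lin_ext_derivation:
  fixes F :: "'a::comm_monoid_add \<Rightarrow> 'b::comm_semiring_0 \<Rightarrow> 'a \<Rightarrow>\<^sub>0 'b"
  assumes F: "coeff_additive F"
    and single: "\<And>m1 m2 a b. lin_ext F (Poly_Mapping.single m1 a * Poly_Mapping.single m2 b) =
      lin_ext F (Poly_Mapping.single m1 a) * Poly_Mapping.single m2 b +
      Poly_Mapping.single m1 a * lin_ext F (Poly_Mapping.single m2 b)"
  shows "lin_ext F (p * q) = lin_ext F p * q + p * lin_ext F q"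
proof -
  let ?P = "\<lambda>m. Poly_Mapping.single m (Poly_Mapping.lookup p m)"
  let ?Q = "\<lambda>m. Poly_Mapping.single m (Poly_Mapping.lookup q m)"
  have "lin_ext F (p * q) =
      lin_ext F ((\<Sum>i\<in>Poly_Mapping.keys p. ?P i) * (\<Sum>j\<in>Poly_Mapping.keys q. ?Q j))"
    by (simp only: sum_single_lookup_keys)
  also have "\<dots> = (\<Sum>i\<in>Poly_Mapping.keys p. \<Sum>j\<in>Poly_Mapping.keys q.
      lin_ext F (?P i) * ?Q j + ?P i * lin_ext F (?Q j))"
    by (simp add: sum_product lin_ext_sum[OF F] single)
  also have "\<dots> = lin_ext F (\<Sum>i\<in>Poly_Mapping.keys p. ?P i) * (\<Sum>j\<in>Poly_Mapping.keys q. ?Q j) +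
      (\<Sum>i\<in>Poly_Mapping.keys p. ?P i) * lin_ext F (\<Sum>j\<in>Poly_Mapping.keys q. ?Q j)"
    by (simp add: lin_ext_sum[OF F] sum.distrib sum_product)
  finally show ?thesis
    by (simp only: sum_single_lookup_keys)
qed

lemma Dx_eq_lin_ext: "Dx = lin_ext (\<lambda>m c. dconst c * Dmon m)"
  by (simp add: fun_eq_iff Dx_def lin_ext_def)

lemma coeff_additive_Dx: "coeff_additive (\<lambda>m c. dconst c * Dmon m)"
  by (simp add: coeff_additive_def dconst_add distrib_right)

lemma pdiff_eq_lin_ext:
  "pdiff v = lin_ext (\<lambda>m c. Poly_Mapping.single (m - {#v#}) (c * of_nat (count m v)))"
  by (simp add: fun_eq_iff pdiff_def lin_ext_def)

lemma coeff_additive_pdiff: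
  "coeff_additive (\<lambda>m c. Poly_Mapping.single (m - {#v#}) (c * of_nat (count m v)))"
  by (simp add: coeff_additive_def single_add distrib_right)

lemma Dx_single: "Dx (Poly_Mapping.single m c) = dconst c * Dmon m"
  unfolding Dx_eq_lin_ext by (rule lin_ext_single[OF coeff_additive_Dx])

lemma pdiff_single:
  "pdiff v (Poly_Mapping.single m c) = Poly_Mapping.single (m - {#v#}) (c * of_nat (count m v))"
  unfolding pdiff_eq_lin_ext by (rule lin_ext_single[OF coeff_additive_pdiff])

lemma Dmon_add:
  "Dmon (m1 + m2) = Dmon m1 * Poly_Mapping.single m2 1 + Poly_Mapping.single m1 1 * Dmon m2"
proof -
  have left: "m1 + m2 - {#v#} = m1 - {#v#} + m2" if "v \<in># m1" for v
    using that by (metis add.commute diff_union_single_conv)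
  have right: "m1 + m2 - {#v#} = m1 + (m2 - {#v#})" if "v \<in># m2" for v
    using that by (metis diff_union_single_conv)
  have "image_mset (\<lambda>v. Poly_Mapping.single (m1 + m2 - {#v#} + {#dshift v#}) (1::complex)) m1 =
      image_mset (\<lambda>v. Poly_Mapping.single (m1 - {#v#} + {#dshift v#}) 1 * Poly_Mapping.single m2 1) m1"
    by (rule image_mset_cong) (simp only: mult_single left, simp add: ac_simps)
  moreover have "image_mset (\<lambda>v. Poly_Mapping.single (m1 + m2 - {#v#} + {#dshift v#}) (1::complex)) m2 =
      image_mset (\<lambda>v. Poly_Mapping.single m1 1 * Poly_Mapping.single (m2 - {#v#} + {#dshift v#}) 1) m2"
    by (rule image_mset_cong) (simp only: mult_single right, simp add: ac_simps)
  ultimately show ?thesis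
    unfolding Dmon_def
    by (simp only: image_mset_union sum_mset.union sum_mset_distrib_left sum_mset_distrib_right)
qed

lemma Dx_mult: "Dx (p * q) = Dx p * q + p * Dx q"
  unfolding Dx_eq_lin_ext
proof (rule lin_ext_derivation[OF coeff_additive_Dx], unfold Dx_eq_lin_ext[symmetric])
  fix m1 m2 a b
  have "Dx (Poly_Mapping.single m1 a * Poly_Mapping.single m2 b) =
      (dconst a * Dmon m1) * (dconst b * Poly_Mapping.single m2 1) +
      (dconst a * Poly_Mapping.single m1 1) * (dconst b * Dmon m2)"
    by (simp add: mult_single Dx_single Dmon_add dconst_mult[symmetric] algebra_simps)
  then show "Dx (Poly_Mapping.single m1 a * Poly_Mapping.single m2 b) =
      Dx (Poly_Mapping.single m1 a) * Poly_Mapping.single m2 b +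
      Poly_Mapping.single m1 a * Dx (Poly_Mapping.single m2 b)"
    by (simp add: Dx_single dconst_mult_single)
qed

lemma single_diff_count:
  "Poly_Mapping.single (m + m' - {#v#}) (c * of_nat (count m v)) =
    Poly_Mapping.single (m - {#v#} + m') (c * of_nat (count m v))"
  by (cases "v \<in># m") (auto simp: not_in_iff diff_union_single_conv ac_simps)

lemma pdiff_mult: "pdiff v (p * q) = pdiff v p * q + p * pdiff v q"
  unfolding pdiff_eq_lin_ext
proof (rule lin_ext_derivation[OF coeff_additive_pdiff], unfold pdiff_eq_lin_ext[symmetric])
  fix m1 m2 a b
  have "pdiff v (Poly_Mapping.single m1 a * Poly_Mapping.single m2 b) =
      Poly_Mapping.single (m1 + m2 - {#v#}) (a * b * of_nat (count m1 v)) +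
      Poly_Mapping.single (m2 + m1 - {#v#}) (a * b * of_nat (count m2 v))"
    by (simp add: mult_single pdiff_single single_add[symmetric] algebra_simps)
  also have "\<dots> = Poly_Mapping.single (m1 - {#v#} + m2) (a * b * of_nat (count m1 v)) +
      Poly_Mapping.single (m2 - {#v#} + m1) (a * b * of_nat (count m2 v))"
    by (simp only: single_diff_count)
  also have "\<dots> = Poly_Mapping.single (m1 - {#v#} + m2) (a * of_nat (count m1 v) * b) +
      Poly_Mapping.single (m1 + (m2 - {#v#})) (a * (b * of_nat (count m2 v)))"
    by (simp add: add.commute[of "m2 - {#v#}"] mult_ac)
  finally show "pdiff v (Poly_Mapping.single m1 a * Poly_Mapping.single m2 b) =
      pdiff v (Poly_Mapping.single m1 a) * Poly_Mapping.single m2 b +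
      Poly_Mapping.single m1 a * pdiff v (Poly_Mapping.single m2 b)"
    by (simp only: pdiff_single mult_single)
qed

lemma Dx_add: "Dx (p + q) = Dx p + Dx q"
  unfolding Dx_eq_lin_ext by (rule lin_ext_add[OF coeff_additive_Dx])

lemma Dx_zero [simp]: "Dx 0 = 0"
  unfolding Dx_eq_lin_ext by simp

lemma Dx_diff: "Dx (p - q) = Dx p - Dx q"
  using Dx_add[of "p - q" q] by (simp add: algebra_simps)

lemma Dx_sum: "Dx (\<Sum>i\<in>I. g i) = (\<Sum>i\<in>I. Dx (g i))"
  unfolding Dx_eq_lin_ext by (rule lin_ext_sum[OF coeff_additive_Dx])

lemma Dx_dconst [simp]: "Dx (dconst c) = 0"
  by (simp add: dconst_def Dx_single Dmon_def)

lemma Dx_dconst_mult: "Dx (dconst c * p) = dconst c * Dx p"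
  by (simp add: Dx_mult)

lemma Dx_dv: "Dx (dv v) = dv (dshift v)"
  by (simp add: dv_def Dx_single Dmon_def dconst_mult_single)

lemma Dx_funpow_add: "(Dx ^^ k) (p + q) = (Dx ^^ k) p + (Dx ^^ k) q"
  by (induction k) (simp_all add: Dx_add)

lemma Dx_funpow_zero [simp]: "(Dx ^^ k) 0 = 0"
  by (induction k) simp_all

lemma Dx_funpow_dconst_mult: "(Dx ^^ k) (dconst c * p) = dconst c * (Dx ^^ k) p"
  by (induction k) (simp_all add: Dx_dconst_mult)

lemma Dx_funpow_dv_U: "(Dx ^^ k) (dv (U j)) = dv (U (j + k))"
  by (induction k) (simp_all add: Dx_dv)

lemma Dx_funpow_dv_Ubar: "(Dx ^^ k) (dv (Ubar j)) = dv (Ubar (j + k))"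
  by (induction k) (simp_all add: Dx_dv)

lemma Dx_funpow_mult:
  "(Dx ^^ r) (p * q) = (\<Sum>i\<le>r. dconst (of_nat (r choose i)) * ((Dx ^^ i) p * (Dx ^^ (r - i)) q))"
proof (induction r)
  case 0
  then show ?case by simp
next
  case (Suc r)
  define f where "f i = (Dx ^^ i) p * (Dx ^^ (Suc r - i)) q" for i
  have pascal: "(if i = 0 then 0 else dconst (of_nat (r choose (i - 1)))) * f i +
      dconst (of_nat (r choose i)) * f i = dconst (of_nat (Suc r choose i)) * f i" for i
    by (cases i) (simp_all add: dconst_add[symmetric] distrib_right[symmetric] add.commute)
  have "(Dx ^^ Suc r) (p * q) = (\<Sum>i\<le>r. dconst (of_nat (r choose i)) * f (Suc i)) +
      (\<Sum>i\<le>r. dconst (of_nat (r choose i)) * f i)"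
    by (simp add: Suc Dx_sum Dx_dconst_mult Dx_mult f_def sum.distrib distrib_left Suc_diff_le)
  also have "(\<Sum>i\<le>r. dconst (of_nat (r choose i)) * f (Suc i)) =
      (\<Sum>i\<le>Suc r. (if i = 0 then 0 else dconst (of_nat (r choose (i - 1)))) * f i)"
    by (simp add: sum.atMost_Suc_shift del: sum.atMost_Suc)
  also have "(\<Sum>i\<le>r. dconst (of_nat (r choose i)) * f i) =
      (\<Sum>i\<le>Suc r. dconst (of_nat (r choose i)) * f i)"
    by (simp add: binomial_eq_0)
  also have "(\<Sum>i\<le>Suc r. (if i = 0 then 0 else dconst (of_nat (r choose (i - 1)))) * f i) +
      (\<Sum>i\<le>Suc r. dconst (of_nat (r choose i)) * f i) =
      (\<Sum>i\<le>Suc r. dconst (of_nat (Suc r choose i)) * f i)"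
    by (simp only: sum.distrib[symmetric] pascal)
  finally show ?case
    by (simp add: f_def)
qed

lemma pdiff_add: "pdiff v (p + q) = pdiff v p + pdiff v q"
  unfolding pdiff_eq_lin_ext by (rule lin_ext_add[OF coeff_additive_pdiff])

lemma pdiff_zero [simp]: "pdiff v 0 = 0"
  unfolding pdiff_eq_lin_ext by simp

lemma pdiff_dconst [simp]: "pdiff v (dconst c) = 0"
  by (simp add: dconst_def pdiff_single)

lemma pdiff_dconst_mult: "pdiff v (dconst c * p) = dconst c * pdiff v p"
  by (simp add: pdiff_mult)

lemma pdiff_dv: "pdiff v (dv w) = (if v = w then 1 else 0)"
  by (auto simp: dv_def pdiff_single)

section \<open>Degree filtration\<close>

definition deg_ge :: "nat \<Rightarrow> ('a multiset \<Rightarrow>\<^sub>0 'b::zero) \<Rightarrow> bool" where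
  "deg_ge s p \<longleftrightarrow> (\<forall>m\<in>Poly_Mapping.keys p. s \<le> size m)"

lemma deg_ge_zero [simp]: "deg_ge s 0"
  by (simp add: deg_ge_def)

lemma deg_ge_mono: "s' \<le> s \<Longrightarrow> deg_ge s p \<Longrightarrow> deg_ge s' p"
  by (auto simp: deg_ge_def)

lemma deg_ge_single: "s \<le> size m \<Longrightarrow> deg_ge s (Poly_Mapping.single m c)"
  by (simp add: deg_ge_def)

lemma deg_ge_add: "deg_ge s p \<Longrightarrow> deg_ge s q \<Longrightarrow> deg_ge s (p + q)"
  using keys_add[of p q] by (auto simp: deg_ge_def)

lemma deg_ge_sum: "(\<And>i. i \<in> I \<Longrightarrow> deg_ge s (g i)) \<Longrightarrow> deg_ge s (\<Sum>i\<in>I. g i)"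
  by (induction I rule: infinite_finite_induct) (auto intro: deg_ge_add)

lemma deg_ge_sum_mset: "(\<And>v. v \<in># M \<Longrightarrow> deg_ge s (f v)) \<Longrightarrow> deg_ge s (\<Sum>v\<in>#M. f v)"
  by (induction M) (auto intro: deg_ge_add)

lemma deg_ge_mult:
  fixes p q :: "'a multiset \<Rightarrow>\<^sub>0 'b::semiring_0"
  assumes "deg_ge s p" and "deg_ge t q"
  shows "deg_ge (s + t) (p * q)"
  unfolding deg_ge_def
proof
  fix m assume "m \<in> Poly_Mapping.keys (p * q)"
  then obtain m1 m2 where "m = m1 + m2" "m1 \<in> Poly_Mapping.keys p" "m2 \<in> Poly_Mapping.keys q"
    using keys_mult[of p q] by blast
  with assms show "s + t \<le> size m"
    by (simp add: deg_ge_def add_mono)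
qed

lemma deg_ge_dv: "deg_ge 1 (dv v)"
  by (simp add: dv_def deg_ge_single)

lemma deg_ge_dconst_mult: "deg_ge s p \<Longrightarrow> deg_ge s (dconst c * p)"
  using deg_ge_mult[of 0 "dconst c" s p] by (simp add: dconst_def deg_ge_single)

lemma deg_ge_Dmon: "deg_ge (size m) (Dmon m)"
  unfolding Dmon_def
  by (rule deg_ge_sum_mset, rule deg_ge_single) (simp add: size_Diff_singleton)

lemma deg_ge_Dx: "deg_ge s p \<Longrightarrow> deg_ge s (Dx p)"
  unfolding Dx_def
proof (rule deg_ge_sum)
  fix m assume "deg_ge s p" "m \<in> Poly_Mapping.keys p"
  then have "s \<le> size m"
    by (simp add: deg_ge_def)
  then show "deg_ge s (dconst (Poly_Mapping.lookup p m) * Dmon m)"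
    by (intro deg_ge_dconst_mult deg_ge_mono[OF _ deg_ge_Dmon])
qed

lemma deg_ge_Dx_funpow: "deg_ge s p \<Longrightarrow> deg_ge s ((Dx ^^ k) p)"
  by (induction k) (auto intro: deg_ge_Dx)

lemma deg_ge_pdiff: "deg_ge (Suc s) p \<Longrightarrow> deg_ge s (pdiff v p)"
  unfolding pdiff_def
  by (rule deg_ge_sum) (auto simp: deg_ge_def size_Diff_singleton_if)

lemma lookup_eq_0_if_deg_ge: "deg_ge s p \<Longrightarrow> size m < s \<Longrightarrow> Poly_Mapping.lookup p m = 0"
  unfolding deg_ge_def by (metis in_keys_iff not_less)

section \<open>Cubic forms\<close>

lemma sum3_atMost_Suc_shift:
  fixes G :: "nat \<Rightarrow> nat \<Rightarrow> nat \<Rightarrow> 'a::comm_monoid_add"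
  assumes "\<And>b e. G 0 b e = 0" and "\<And>a b e. G (Suc a) b e \<noteq> 0 \<Longrightarrow> b \<le> N \<and> e \<le> N"
  shows "(\<Sum>a\<le>Suc N. \<Sum>b\<le>Suc N. \<Sum>e\<le>Suc N. G a b e) = (\<Sum>a\<le>N. \<Sum>b\<le>N. \<Sum>e\<le>N. G (Suc a) b e)"
proof -
  have "G (Suc a) (Suc N) e = 0" "G (Suc a) b (Suc N) = 0" for a b e
    using assms(2) by fastforce+
  then have inner: "(\<Sum>b\<le>Suc N. \<Sum>e\<le>Suc N. G (Suc a) b e) = (\<Sum>b\<le>N. \<Sum>e\<le>N. G (Suc a) b e)" for a
    by simp
  have "(\<Sum>a\<le>Suc N. \<Sum>b\<le>Suc N. \<Sum>e\<le>Suc N. G a b e) =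
      (\<Sum>a\<le>N. \<Sum>b\<le>Suc N. \<Sum>e\<le>Suc N. G (Suc a) b e)"
    by (subst sum.atMost_Suc_shift) (simp add: assms(1))
  with inner show ?thesis
    by simp
qed

lemma sum3_rotate:
  "(\<Sum>a\<in>A. \<Sum>b\<in>B. \<Sum>e\<in>C. G a b e) = (\<Sum>e\<in>C. \<Sum>a\<in>A. \<Sum>b\<in>B. G a b e)"
  by (subst sum.swap) (simp add: sum.swap[of _ B])

lemma sum_atMost_if_add_eq:
  fixes e n M :: nat
  shows "(\<Sum>b\<le>M. if b + e = n then f b else 0) = (if e \<le> n \<and> n - e \<le> M then f (n - e) else 0)"
proof -
  have "b + e = n \<longleftrightarrow> b = n - e \<and> e \<le> n" for b
    by arith
  then show ?thesis
    by (cases "e \<le> n") (simp_all add: sum.delta)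
qed

definition cubic :: "nat \<Rightarrow> nat \<Rightarrow> nat \<Rightarrow> dpoly" where
  "cubic a b e = dv (U a) * dv (Ubar b) * dv (Ubar e)"

definition cubic_form :: "nat \<Rightarrow> (nat \<Rightarrow> nat \<Rightarrow> nat \<Rightarrow> complex) \<Rightarrow> dpoly" where
  "cubic_form N c = (\<Sum>a\<le>N. \<Sum>b\<le>N. \<Sum>e\<le>N. dconst (c a b e) * cubic a b e)"

definition Dx_coeffs ::
    "(nat \<Rightarrow> nat \<Rightarrow> nat \<Rightarrow> complex) \<Rightarrow> nat \<Rightarrow> nat \<Rightarrow> nat \<Rightarrow> complex" where
  "Dx_coeffs c a b e = (if 0 < a then c (a - 1) b e else 0) +
    (if 0 < b then c a (b - 1) e else 0) + (if 0 < e then c a b (e - 1) else 0)"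

lemma Dx_cubic: "Dx (cubic a b e) = cubic (Suc a) b e + cubic a (Suc b) e + cubic a b (Suc e)"
  by (simp add: cubic_def Dx_mult Dx_dv algebra_simps)

lemma deg_ge_cubic_form: "deg_ge 3 (cubic_form N c)"
proof -
  have "deg_ge (1 + 1 + 1) (cubic a b e)" for a b e
    unfolding cubic_def by (intro deg_ge_mult deg_ge_dv)
  then show ?thesis
    unfolding cubic_form_def by (intro deg_ge_sum deg_ge_dconst_mult) (simp add: numeral_3_eq_3)
qed

lemma Dx_cubic_form:
  assumes "\<And>a b e. c a b e \<noteq> 0 \<Longrightarrow> a \<le> N \<and> b \<le> N \<and> e \<le> N"
  shows "Dx (cubic_form N c) = cubic_form (Suc N) (Dx_coeffs c)"
proof -
  let ?S = "\<lambda>M G. \<Sum>a\<le>M. \<Sum>b\<le>M. \<Sum>e\<le>M. G a b e :: dpoly"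
  have supp: "a \<le> N \<and> b \<le> N \<and> e \<le> N" if "dconst (c a b e) * p \<noteq> 0" for a b e p
    using assms that by (metis dconst_0 mult_zero_left)
  have shift_a: "?S (Suc N) (\<lambda>a b e. dconst (if 0 < a then c (a - 1) b e else 0) * cubic a b e) =
      ?S N (\<lambda>a b e. dconst (c a b e) * cubic (Suc a) b e)"
    by (subst sum3_atMost_Suc_shift) (use supp in auto)
  have shift_b: "?S (Suc N) (\<lambda>a b e. dconst (if 0 < b then c a (b - 1) e else 0) * cubic a b e) =
      ?S N (\<lambda>a b e. dconst (c a b e) * cubic a (Suc b) e)"
    by (subst (1 2) sum.swap, subst sum3_atMost_Suc_shift) (use supp in auto)
  have shift_e: "?S (Suc N) (\<lambda>a b e. dconst (if 0 < e then c a b (e - 1) else 0) * cubic a b e) =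
      ?S N (\<lambda>a b e. dconst (c a b e) * cubic a b (Suc e))"
    by (subst (1 2) sum3_rotate, subst sum3_atMost_Suc_shift) (use supp in auto)
  have "Dx (cubic_form N c) = ?S N (\<lambda>a b e. dconst (c a b e) * cubic (Suc a) b e) +
      ?S N (\<lambda>a b e. dconst (c a b e) * cubic a (Suc b) e) +
      ?S N (\<lambda>a b e. dconst (c a b e) * cubic a b (Suc e))"
    by (simp add: cubic_form_def Dx_sum Dx_dconst_mult Dx_cubic distrib_left sum.distrib)
  also have "\<dots> = cubic_form (Suc N) (Dx_coeffs c)"
    unfolding shift_a[symmetric] shift_b[symmetric] shift_e[symmetric]
    by (simp only: cubic_form_def Dx_coeffs_def dconst_add distrib_right sum.distrib)
  finally show ?thesis .
qed

lemma cubic_form_add: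
  "cubic_form N (\<lambda>a b e. c a b e + d a b e) = cubic_form N c + cubic_form N d"
  by (simp add: cubic_form_def dconst_add distrib_right sum.distrib)

lemma cubic_form_scale: "cubic_form N (\<lambda>a b e. x * c a b e) = dconst x * cubic_form N c"
  by (simp add: cubic_form_def dconst_mult[symmetric] sum_distrib_left mult.assoc)

lemma cubic_form_diagonal:
  "cubic_form (Suc n) (\<lambda>a b e. if a = 0 \<and> b + e = n then x else 0) =
    (\<Sum>e\<le>n. dconst x * cubic 0 (n - e) e)"
proof -
  have "cubic_form (Suc n) (\<lambda>a b e. if a = 0 \<and> b + e = n then x else 0) =
      (\<Sum>a\<le>Suc n. if a = 0 then
        (\<Sum>b\<le>Suc n. \<Sum>e\<le>Suc n. if b + e = n then dconst x * cubic 0 b e else 0) else 0)"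
    unfolding cubic_form_def by (intro sum.cong) (auto simp: dconst_if_mult)
  also have "\<dots> = (\<Sum>b\<le>Suc n. \<Sum>e\<le>Suc n. if b + e = n then dconst x * cubic 0 b e else 0)"
    by simp
  also have "\<dots> = (\<Sum>e\<le>Suc n. \<Sum>b\<le>Suc n. if b + e = n then dconst x * cubic 0 b e else 0)"
    by (rule sum.swap)
  also have "\<dots> = (\<Sum>e\<le>n. dconst x * cubic 0 (n - e) e)"
    by (simp add: sum_atMost_if_add_eq le_SucI)
  finally show ?thesis .
qed

section \<open>Linear and cubic part of Y\<close>

text \<open>\<open>cubic_coeff n a b e\<close> is the coefficient of \<open>u\<^sub>a ubar\<^sub>b ubar\<^sub>e\<close> in \<open>Y n\<close>,
  counted over ordered pairs \<open>(b, e)\<close>. Its second summand comes from \<open>u\<close> times the product of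
  the linear parts in the recursion for \<open>Y\<close>.\<close>

fun cubic_coeff :: "nat \<Rightarrow> nat \<Rightarrow> nat \<Rightarrow> nat \<Rightarrow> complex" where
  "cubic_coeff 0 a b e = 0"
| "cubic_coeff (Suc n) a b e = 1 / (2 * \<i>) * Dx_coeffs (cubic_coeff n) a b e +
    (if a = 0 \<and> b + e = n then (1 / (2 * \<i>)) ^ (n + 3) else 0)"

lemma cubic_coeff_support: "cubic_coeff n a b e \<noteq> 0 \<Longrightarrow> a + b + e + 1 = n"
proof (induction n arbitrary: a b e)
  case 0
  then show ?case by simp
next
  case (Suc n)
  show ?case
  proof (rule ccontr)
    assume ne: "a + b + e + 1 \<noteq> Suc n"
    have "(if 0 < a then cubic_coeff n (a - 1) b e else 0) = 0"
      using Suc.IH[of "a - 1" b e] ne by (cases a) auto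
    moreover have "(if 0 < b then cubic_coeff n a (b - 1) e else 0) = 0"
      using Suc.IH[of a "b - 1" e] ne by (cases b) auto
    moreover have "(if 0 < e then cubic_coeff n a b (e - 1) else 0) = 0"
      using Suc.IH[of a b "e - 1"] ne by (cases e) auto
    ultimately show False
      using Suc.prems ne by (simp add: Dx_coeffs_def split: if_split_asm)
  qed
qed

lemma cubic_coeff_swap: "cubic_coeff n a b e = cubic_coeff n a e b"
proof (induction n arbitrary: a b e)
  case 0
  then show ?case by simp
next
  case (Suc n)
  then show ?case
    by (simp add: Dx_coeffs_def add.commute)
qed

lemma cubic_coeff_Ubar0:
  "cubic_coeff n a b 0 = (if a + b + 1 = n then (1 / (2 * \<i>)) ^ (n + 2) * of_nat (n choose b) else 0)"
proof (induction n arbitrary: a b)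
  case 0
  then show ?case by simp
next
  case (Suc n)
  define z :: complex where "z = 1 / (2 * \<i>)"
  have IH: "cubic_coeff n a' b' 0 = (if a' + b' + 1 = n then z ^ (n + 2) * of_nat (n choose b') else 0)"
    for a' b'
    using Suc.IH by (simp add: z_def)
  have "cubic_coeff (Suc n) a b 0 =
      z * ((if 0 < a \<and> a + b = n then z ^ (n + 2) * of_nat (n choose b) else 0) +
        (if 0 < b \<and> a + b = n then z ^ (n + 2) * of_nat (n choose (b - 1)) else 0)) +
      (if a = 0 \<and> b = n then z ^ (n + 3) else 0)"
    by (auto simp: Dx_coeffs_def IH z_def)
  also have "\<dots> = (if a + b = n then z ^ (n + 3) *
      (of_nat (n choose b) + (if 0 < b then of_nat (n choose (b - 1)) else 0)) else 0)"
    by (cases "a + b = n"; cases a) (auto simp: algebra_simps power_add eval_nat_numeral)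
  also have "\<dots> = (if a + b + 1 = Suc n then z ^ (Suc n + 2) * of_nat (Suc n choose b) else 0)"
    by (cases b) (simp_all add: power_add power3_eq_cube mult_ac)
  finally show ?case
    by (simp add: z_def)
qed

definition Y_lin :: "nat \<Rightarrow> dpoly" where
  "Y_lin n = dconst (- ((1 / (2 * \<i>)) ^ Suc n)) * dv (Ubar n)"

definition Y_cubic :: "nat \<Rightarrow> dpoly" where
  "Y_cubic n = cubic_form n (cubic_coeff n)"

lemma Y_lin_Suc: "Y_lin (Suc n) = dconst (1 / (2 * \<i>)) * Dx (Y_lin n)"
  by (simp add: Y_lin_def Dx_dconst_mult Dx_dv dconst_mult mult.assoc[symmetric])

lemma U0_mult_Y_lin_mult_Y_lin:
  "dconst (1 / (2 * \<i>)) * (dv (U 0) * (Y_lin b * Y_lin e)) =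
    dconst ((1 / (2 * \<i>)) ^ (b + e + 3)) * cubic 0 b e"
proof -
  define z :: complex where "z = 1 / (2 * \<i>)"
  have "dconst z * (dv (U 0) * (Y_lin b * Y_lin e)) =
      dconst (z * (- (z ^ Suc b)) * (- (z ^ Suc e))) * cubic 0 b e"
    by (simp only: Y_lin_def cubic_def z_def dconst_mult[symmetric] mult_ac)
  also have "z * (- (z ^ Suc b)) * (- (z ^ Suc e)) = z ^ (b + e + 3)"
    by (simp add: power_add power3_eq_cube mult_ac)
  finally show ?thesis
    by (simp add: z_def)
qed

lemma Y_cubic_Suc:
  "Y_cubic (Suc n) =
    dconst (1 / (2 * \<i>)) * (Dx (Y_cubic n) + dv (U 0) * (\<Sum>k\<le>n. Y_lin (n - k) * Y_lin k))"
proof -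
  have bounded: "a \<le> n \<and> b \<le> n \<and> e \<le> n" if "cubic_coeff n a b e \<noteq> 0" for a b e
    using cubic_coeff_support[OF that] by simp
  have Dx_Y_cubic: "Dx (Y_cubic n) = cubic_form (Suc n) (Dx_coeffs (cubic_coeff n))"
    unfolding Y_cubic_def by (rule Dx_cubic_form) (rule bounded)
  have "cubic_coeff (Suc n) = (\<lambda>a b e. 1 / (2 * \<i>) * Dx_coeffs (cubic_coeff n) a b e +
      (if a = 0 \<and> b + e = n then (1 / (2 * \<i>)) ^ (n + 3) else 0))"
    by (simp add: fun_eq_iff)
  then have "Y_cubic (Suc n) = dconst (1 / (2 * \<i>)) * Dx (Y_cubic n) +
      (\<Sum>k\<le>n. dconst ((1 / (2 * \<i>)) ^ (n + 3)) * cubic 0 (n - k) k)"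
    by (simp only: Dx_Y_cubic Y_cubic_def[of "Suc n"] cubic_form_add cubic_form_scale
        cubic_form_diagonal)
  also have "(\<Sum>k\<le>n. dconst ((1 / (2 * \<i>)) ^ (n + 3)) * cubic 0 (n - k) k) =
      dconst (1 / (2 * \<i>)) * (dv (U 0) * (\<Sum>k\<le>n. Y_lin (n - k) * Y_lin k))"
    unfolding sum_distrib_left U0_mult_Y_lin_mult_Y_lin by (intro sum.cong) simp_all
  finally show ?thesis
    by (simp add: distrib_left)
qed

lemma deg_ge_Y_lin: "deg_ge 1 (Y_lin n)"
  unfolding Y_lin_def by (intro deg_ge_dconst_mult deg_ge_dv)

lemma deg_ge_Y: "deg_ge 1 (Y n)"
proof (induction n)
  case 0
  show ?case
    unfolding Y.simps by (intro deg_ge_dconst_mult deg_ge_dv)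
next
  case (Suc n)
  have "deg_ge (1 + 0) (dv (U 0) * (\<Sum>k\<le>n. Y (n - k) * Y k))"
    by (intro deg_ge_mult deg_ge_dv) (simp add: deg_ge_def)
  with Suc.IH show ?case
    by (simp add: deg_ge_dconst_mult deg_ge_add deg_ge_Dx)
qed

lemma Y_higher_Suc:
  "Y (Suc n) - Y_lin (Suc n) - Y_cubic (Suc n) = dconst (1 / (2 * \<i>)) *
    (Dx (Y n - Y_lin n - Y_cubic n) + dv (U 0) * (\<Sum>k\<le>n. Y (n - k) * Y k - Y_lin (n - k) * Y_lin k))"
  by (simp add: Y_lin_Suc Y_cubic_Suc Dx_diff Dx_add sum_subtractf algebra_simps)

lemma deg_ge_Y_higher: "deg_ge 5 (Y n - Y_lin n - Y_cubic n)"
proof (induction n rule: less_induct)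
  case (less n)
  show ?case
  proof (cases n)
    case 0
    then show ?thesis
      by (simp add: Y_lin_def Y_cubic_def cubic_form_def)
  next
    case (Suc n')
    have deg3: "deg_ge 3 (Y j - Y_lin j)" if "j \<le> n'" for j
    proof -
      have "deg_ge 3 (Y j - Y_lin j - Y_cubic j)"
        using less.IH[of j] Suc that by (simp add: deg_ge_mono[of 3 5])
      then have "deg_ge 3 (Y_cubic j + (Y j - Y_lin j - Y_cubic j))"
        by (intro deg_ge_add) (simp_all add: Y_cubic_def deg_ge_cubic_form)
      then show ?thesis
        by simp
    qed
    have "deg_ge 4 (Y a * Y b - Y_lin a * Y_lin b)" if "a \<le> n'" "b \<le> n'" for a b
    proof -
      have "deg_ge (1 + 3) (Y_lin a * (Y b - Y_lin b))" "deg_ge (3 + 1) ((Y a - Y_lin a) * Y b)"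
        using that by (intro deg_ge_mult deg_ge_Y deg_ge_Y_lin deg3; simp)+
      moreover have "Y a * Y b - Y_lin a * Y_lin b = Y_lin a * (Y b - Y_lin b) + (Y a - Y_lin a) * Y b"
        by (simp add: algebra_simps)
      ultimately show ?thesis
        by (simp add: deg_ge_add)
    qed
    then have "deg_ge (1 + 4) (dv (U 0) * (\<Sum>k\<le>n'. Y (n' - k) * Y k - Y_lin (n' - k) * Y_lin k))"
      by (intro deg_ge_mult deg_ge_dv deg_ge_sum) simp
    then have "deg_ge 5 (dv (U 0) * (\<Sum>k\<le>n'. Y (n' - k) * Y k - Y_lin (n' - k) * Y_lin k))"
      by simp
    moreover have "deg_ge 5 (Dx (Y n' - Y_lin n' - Y_cubic n'))"
      using less.IH[of n'] Suc by (simp add: deg_ge_Dx)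
    ultimately show ?thesis
      unfolding Suc Y_higher_Suc by (blast intro: deg_ge_dconst_mult deg_ge_add)
  qed
qed

lemma lookup_Y_Ubar: "Poly_Mapping.lookup (Y n) {#Ubar n#} = - ((1 / (2 * \<i>)) ^ Suc n)"
proof -
  have "Y n = Y_lin n + Y_cubic n + (Y n - Y_lin n - Y_cubic n)"
    by simp
  moreover have "Poly_Mapping.lookup (Y_cubic n) {#Ubar n#} = 0"
    unfolding Y_cubic_def by (rule lookup_eq_0_if_deg_ge[OF deg_ge_cubic_form]) simp
  moreover have "Poly_Mapping.lookup (Y n - Y_lin n - Y_cubic n) {#Ubar n#} = 0"
    by (rule lookup_eq_0_if_deg_ge[OF deg_ge_Y_higher]) simp
  ultimately show ?thesis
    by (metis Y_lin_def add.right_neutral lookup_add lookup_dconst_mult lookup_dv mult.right_neutral)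
qed

section \<open>Variational derivative\<close>

definition varderiv_upto :: "nat \<Rightarrow> dpoly \<Rightarrow> dpoly" where
  "varderiv_upto N g = (\<Sum>k\<le>N. dconst ((-1) ^ k) * (Dx ^^ k) (pdiff (Ubar k) g))"

lemma varderiv_ubar_eq_upto: "varderiv_ubar f = varderiv_upto (maxord f) f"
  by (simp add: varderiv_ubar_def varderiv_upto_def)

lemma varderiv_upto_zero [simp]: "varderiv_upto N 0 = 0"
  by (simp add: varderiv_upto_def)

lemma varderiv_upto_add: "varderiv_upto N (p + q) = varderiv_upto N p + varderiv_upto N q"
  by (simp add: varderiv_upto_def pdiff_add Dx_funpow_add distrib_left sum.distrib)

lemma varderiv_upto_dconst_mult: "varderiv_upto N (dconst c * p) = dconst c * varderiv_upto N p"
  by (simp add: varderiv_upto_def pdiff_dconst_mult Dx_funpow_dconst_mult sum_distrib_left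
      mult.left_commute)

lemma varderiv_upto_sum: "varderiv_upto N (\<Sum>i\<in>I. g i) = (\<Sum>i\<in>I. varderiv_upto N (g i))"
  by (induction I rule: infinite_finite_induct) (simp_all add: varderiv_upto_add)

lemma deg_ge_varderiv_upto: "deg_ge (Suc s) p \<Longrightarrow> deg_ge s (varderiv_upto N p)"
  unfolding varderiv_upto_def
  by (intro deg_ge_sum deg_ge_dconst_mult deg_ge_Dx_funpow deg_ge_pdiff)

lemma varderiv_upto_U0_Ubar:
  assumes "n \<le> N"
  shows "varderiv_upto N (dv (U 0) * dv (Ubar n)) = dconst ((-1) ^ n) * dv (U n)"
proof -
  have "varderiv_upto N (dv (U 0) * dv (Ubar n)) =
      (\<Sum>j\<le>N. if j = n then dconst ((-1) ^ j) * (Dx ^^ j) (dv (U 0)) else 0)"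
    unfolding varderiv_upto_def by (intro sum.cong refl) (simp add: pdiff_mult pdiff_dv)
  with assms show ?thesis
    by (simp add: Dx_funpow_dv_U)
qed

lemma varderiv_upto_U0_cubic:
  assumes "b \<le> N" and "e \<le> N"
  shows "varderiv_upto N (dv (U 0) * cubic a b e) =
    dconst ((-1) ^ b) * (Dx ^^ b) (dv (U 0) * dv (U a) * dv (Ubar e)) +
    dconst ((-1) ^ e) * (Dx ^^ e) (dv (U 0) * dv (U a) * dv (Ubar b))"
proof -
  have "pdiff (Ubar j) (dv (U 0) * cubic a b e) =
      (if j = b then dv (U 0) * dv (U a) * dv (Ubar e) else 0) +
      (if j = e then dv (U 0) * dv (U a) * dv (Ubar b) else 0)" for j
    by (simp add: cubic_def pdiff_mult pdiff_dv algebra_simps)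
  then have "varderiv_upto N (dv (U 0) * cubic a b e) =
      (\<Sum>j\<le>N. (if j = b then dconst ((-1) ^ j) * (Dx ^^ j) (dv (U 0) * dv (U a) * dv (Ubar e)) else 0) +
        (if j = e then dconst ((-1) ^ j) * (Dx ^^ j) (dv (U 0) * dv (U a) * dv (Ubar b)) else 0))"
    unfolding varderiv_upto_def by (intro sum.cong refl) (simp add: Dx_funpow_add distrib_left)
  with assms show ?thesis
    by (simp add: sum.distrib)
qed

lemma maxord_ge: "m \<in> Poly_Mapping.keys f \<Longrightarrow> v \<in># m \<Longrightarrow> dord v \<le> maxord f"
  unfolding maxord_def by (rule Max_ge) auto

lemma maxord_U0_mult_Y: "n \<le> maxord (dv (U 0) * Y n)"
proof -
  have "Poly_Mapping.lookup (dv (U 0) * Y n) {#U 0, Ubar n#} = - ((1 / (2 * \<i>)) ^ Suc n)"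
    by (simp add: dv_def lookup_single_mult lookup_Y_Ubar)
  moreover have "- ((1 / (2 * \<i>)) ^ Suc n) \<noteq> 0"
    by simp
  ultimately have "{#U 0, Ubar n#} \<in> Poly_Mapping.keys (dv (U 0) * Y n)"
    by (metis in_keys_iff)
  from maxord_ge[OF this, of "Ubar n"] show ?thesis
    by simp
qed

section \<open>Alternating binomial sums\<close>

lemma sum_mult_Suc_choose:
  "(\<Sum>b\<in>B. w b * of_nat (Suc b choose j)) =
    (\<Sum>b\<in>B. w b * of_nat (b choose j)) +
    (if j = 0 then 0 else (\<Sum>b\<in>B. w b * of_nat (b choose (j - 1)) :: 'a::comm_semiring_1))"
  by (cases j) (simp_all add: sum.distrib distrib_left add.commute)

lemma alternating_sum_choose_mult_choose:
  "(\<Sum>b\<le>n. (-1) ^ b * of_nat (n choose b) * of_nat (b choose j)) =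
    (if j = n then (-1) ^ n else (0::'a::comm_ring_1))"
proof (induction n arbitrary: j)
  case 0
  then show ?case
    by (cases j) simp_all
next
  case (Suc n)
  have pascal: "of_nat (Suc n choose b) =
      of_nat (n choose b) + (if b = 0 then 0 else of_nat (n choose (b - 1)) :: 'a)" for b
    by (cases b) simp_all
  have "(\<Sum>b\<le>Suc n. (-1) ^ b * of_nat (Suc n choose b) * of_nat (b choose j)) =
      (\<Sum>b\<le>Suc n. (-1) ^ b * of_nat (n choose b) * of_nat (b choose j)) +
      (\<Sum>b\<le>Suc n. (if b = 0 then 0 else (-1) ^ b * of_nat (n choose (b - 1)) * of_nat (b choose j)) :: 'a)"
    by (simp only: pascal sum.distrib[symmetric]) (rule sum.cong; simp add: algebra_simps)
  also have "(\<Sum>b\<le>Suc n. (-1) ^ b * of_nat (n choose b) * of_nat (b choose j)) =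
      (\<Sum>b\<le>n. (-1) ^ b * of_nat (n choose b) * of_nat (b choose j) :: 'a)"
    by (simp add: binomial_eq_0)
  also have "(\<Sum>b\<le>Suc n. (if b = 0 then 0 else (-1) ^ b * of_nat (n choose (b - 1)) * of_nat (b choose j))) =
      - (\<Sum>b\<le>n. (-1) ^ b * of_nat (n choose b) * of_nat (Suc b choose j) :: 'a)"
    by (simp add: sum.atMost_Suc_shift sum_negf del: sum.atMost_Suc)
  also have "(\<Sum>b\<le>n. (-1) ^ b * of_nat (n choose b) * of_nat (b choose j)) +
      - (\<Sum>b\<le>n. (-1) ^ b * of_nat (n choose b) * of_nat (Suc b choose j)) =
      (if j = Suc n then (-1) ^ Suc n else 0 :: 'a)"
    unfolding sum_mult_Suc_choose[where w = "\<lambda>b. (-1) ^ b * of_nat (n choose b)"] Suc.IH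
    by auto
  finally show ?case .
qed

lemma alternating_sum_choose_mult_Suc_choose:
  "(\<Sum>b\<le>n. (-1) ^ b * of_nat (n choose b) * of_nat (Suc b choose j)) =
    (-1) ^ n * ((if j = n then 1 else 0) + (if j = Suc n then 1 else 0) :: 'a::comm_ring_1)"
  unfolding sum_mult_Suc_choose[where w = "\<lambda>b. (-1) ^ b * of_nat (n choose b)"]
    alternating_sum_choose_mult_choose
  by auto

lemma alternating_binomial_identity:
  assumes "k \<le> n"
  shows "(\<Sum>b<n. (-1) ^ b * of_nat (n choose b) *
      (of_nat (Suc b choose (n - k)) + of_nat (Suc b choose k))) =
    (-1) ^ (n + 1) * (of_nat ((n + 2) choose (k + 1)) - (if k = 0 then 1 else 0) -
      (if k = n then 1 else (0::'a::comm_ring_1)))"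
proof -
  have "Suc n choose (n - k) = Suc n choose (k + 1)"
    using assms binomial_symmetric[of "k + 1" "Suc n"] by simp
  then have last: "of_nat (Suc n choose (n - k)) + of_nat (Suc n choose k) = (of_nat ((n + 2) choose (k + 1)) :: 'a)"
    by simp
  have "(\<Sum>b\<le>n. (-1) ^ b * of_nat (n choose b) *
      (of_nat (Suc b choose (n - k)) + of_nat (Suc b choose k))) =
      (-1) ^ n * ((if k = 0 then 1 else 0) + (if k = n then 1 else (0::'a)))"
  proof -
    have "n - k = n \<longleftrightarrow> k = 0" "n - k \<noteq> Suc n" "k \<noteq> Suc n"
      using assms by auto
    then show ?thesis
      by (simp add: distrib_left sum.distrib alternating_sum_choose_mult_Suc_choose)
  qed
  then show ?thesis
    using last by (simp add: lessThan_Suc_atMost[symmetric] algebra_simps)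
qed

section \<open>Cubic coefficients of the right-hand side\<close>

lemma lookup_Dx_funpow_U0_U:
  "Poly_Mapping.lookup ((Dx ^^ r) (dv (U 0) * dv (U q))) {#U x, U y#} =
    (if q + r = x + y
     then (if x = y then 1 / 2 else 1) * (of_nat (r choose x) + of_nat (r choose y)) else 0)"
proof -
  have pair_eq: "{#U j, U j'#} = {#U x, U y#} \<longleftrightarrow> (j = x \<and> j' = y) \<or> (j = y \<and> j' = x)" for j j'
    by (auto simp: add_eq_conv_diff)
  have "Poly_Mapping.lookup ((Dx ^^ r) (dv (U 0) * dv (U q))) {#U x, U y#} =
      (\<Sum>j\<le>r. of_nat (r choose j) * (if {#U j, U (q + (r - j))#} = {#U x, U y#} then 1 else 0))"
    by (simp only: Dx_funpow_mult Dx_funpow_dv_U)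
      (simp add: lookup_sum lookup_dconst_mult dv_mult_dv lookup_single when_def)
  also have "\<dots> = (if q + r = x + y then
      (\<Sum>j\<le>r. (if j = x then of_nat (r choose j) else 0) +
        (if j = y \<and> x \<noteq> y then of_nat (r choose j) else 0)) else 0)"
    by (cases "q + r = x + y") (auto simp: pair_eq intro!: sum.cong sum.neutral)
  also have "\<dots> = (if q + r = x + y
      then (if x = y then 1 / 2 else 1) * (of_nat (r choose x) + of_nat (r choose y)) else 0)"
    by (simp add: sum.distrib sum.delta binomial_eq_0)
  finally show ?thesis .
qed

lemma lookup_Dx_funpow_U0_U_Ubar:
  "Poly_Mapping.lookup ((Dx ^^ r) (dv (U 0) * dv (U q) * dv (Ubar e))) {#U x, Ubar 0, U y#} =
    (if e = 0 then Poly_Mapping.lookup ((Dx ^^ r) (dv (U 0) * dv (U q))) {#U x, U y#} else 0)"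
proof -
  have "Poly_Mapping.lookup ((Dx ^^ r) (dv (U 0) * dv (U q) * dv (Ubar e))) {#U x, Ubar 0, U y#} =
      (\<Sum>i\<le>r. of_nat (r choose i) * (if e + r \<le> i then Poly_Mapping.lookup
        ((Dx ^^ i) (dv (U 0) * dv (U q))) ({#U x, U y, Ubar 0#} - {#Ubar (e + r - i)#}) else 0))"
    by (simp add: Dx_funpow_mult[of r "dv (U 0) * dv (U q)"] Dx_funpow_dv_Ubar lookup_sum
        lookup_dconst_mult lookup_mult_dv add_mset_commute)
  also have "\<dots> = (\<Sum>i\<le>r. if i = r \<and> e = 0 then
      Poly_Mapping.lookup ((Dx ^^ i) (dv (U 0) * dv (U q))) {#U x, U y#} else 0)"
    by (intro sum.cong refl) auto
  also have "\<dots> = (if e = 0 then Poly_Mapping.lookup ((Dx ^^ r) (dv (U 0) * dv (U q))) {#U x, U y#} else 0)"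
    by (simp add: sum.delta)
  finally show ?thesis .
qed

lemma lookup_Dx_varderiv_Y_lin:
  assumes "n \<le> N"
  shows "Poly_Mapping.lookup (Dx (varderiv_upto N (dv (U 0) * Y_lin n))) (cubic_mon n k) = 0"
proof -
  have "Dx (varderiv_upto N (dv (U 0) * Y_lin n)) =
      dconst (- ((1 / (2 * \<i>)) ^ Suc n)) * (dconst ((-1) ^ n) * dv (U (Suc n)))"
    using assms unfolding Y_lin_def mult.left_commute[of "dv (U 0)"]
    by (simp only: varderiv_upto_dconst_mult varderiv_upto_U0_Ubar Dx_dconst_mult Dx_dv dshift.simps)
  then show ?thesis
    by (simp add: lookup_dconst_mult lookup_dv cubic_mon_def)
qed

lemma lookup_Dx_varderiv_Y_higher:
  "Poly_Mapping.lookup (Dx (varderiv_upto N (dv (U 0) * (Y n - Y_lin n - Y_cubic n)))) (cubic_mon n k) = 0"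
proof -
  have "deg_ge (Suc 5) (dv (U 0) * (Y n - Y_lin n - Y_cubic n))"
    using deg_ge_mult[OF deg_ge_dv deg_ge_Y_higher] by simp
  then have "deg_ge 5 (Dx (varderiv_upto N (dv (U 0) * (Y n - Y_lin n - Y_cubic n))))"
    by (intro deg_ge_Dx deg_ge_varderiv_upto)
  then show ?thesis
    by (rule lookup_eq_0_if_deg_ge) (simp add: cubic_mon_def)
qed

lemma lookup_Dx_Dx_funpow_cubic_mon:
  assumes "k \<le> n"
  shows "Poly_Mapping.lookup (Dx ((Dx ^^ r) (dv (U 0) * dv (U a) * dv (Ubar e)))) (cubic_mon n k) =
    (if e = 0 then if a + Suc r = n then (if 2 * k = n then 1 / 2 else 1) *
      (of_nat (Suc r choose (n - k)) + of_nat (Suc r choose k)) else 0 else 0)"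
proof -
  have "Dx ((Dx ^^ r) (dv (U 0) * dv (U a) * dv (Ubar e))) =
      (Dx ^^ Suc r) (dv (U 0) * dv (U a) * dv (Ubar e))"
    by simp
  moreover have "n - k = k \<longleftrightarrow> 2 * k = n"
    by auto
  ultimately show ?thesis
    using assms unfolding cubic_mon_def
    by (simp only: lookup_Dx_funpow_U0_U_Ubar lookup_Dx_funpow_U0_U) simp
qed

lemma varderiv_upto_U0_Y_cubic:
  assumes "n \<le> N"
  shows "varderiv_upto N (dv (U 0) * Y_cubic n) =
    (\<Sum>a\<le>n. \<Sum>b\<le>n. \<Sum>e\<le>n. dconst (cubic_coeff n a b e) *
      (dconst ((-1) ^ b) * (Dx ^^ b) (dv (U 0) * dv (U a) * dv (Ubar e)) +
       dconst ((-1) ^ e) * (Dx ^^ e) (dv (U 0) * dv (U a) * dv (Ubar b))))"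
  using assms
  by (simp add: Y_cubic_def cubic_form_def sum_distrib_left mult.left_commute[of "dv (U 0)"]
      varderiv_upto_sum varderiv_upto_dconst_mult varderiv_upto_U0_cubic del: funpow.simps)

lemma sum_atMost_if_add_Suc_eq:
  fixes F :: "nat \<Rightarrow> 'a::comm_monoid_add"
  shows "(\<Sum>a\<le>n. \<Sum>b\<le>n. if a + b + 1 = n then F b else 0) = (\<Sum>b<n. F b)"
proof -
  have "(\<Sum>a\<le>n. \<Sum>b\<le>n. if a + b + 1 = n then F b else 0) =
      (\<Sum>b\<le>n. \<Sum>a\<le>n. if a + Suc b = n then F b else 0)"
    by (subst sum.swap) simp
  also have "\<dots> = (\<Sum>b\<le>n. if b < n then F b else 0)"
    by (intro sum.cong refl, subst sum_atMost_if_add_eq) (simp add: Suc_le_eq)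
  also have "\<dots> = (\<Sum>b<n. F b)"
    by (cases n) (simp_all add: lessThan_Suc_atMost)
  finally show ?thesis .
qed

lemma lookup_Dx_varderiv_Y_cubic:
  assumes "n \<le> N" and "k \<le> n"
  shows "Poly_Mapping.lookup (Dx (varderiv_upto N (dv (U 0) * Y_cubic n))) (cubic_mon n k) =
    2 * (if 2 * k = n then 1 / 2 else 1) * (1 / (2 * \<i>)) ^ (n + 2) *
      (\<Sum>b<n. (-1) ^ b * of_nat (n choose b) *
        (of_nat (Suc b choose (n - k)) + of_nat (Suc b choose k)))"
proof -
  define h :: "nat \<Rightarrow> complex" where
    "h r = (if 2 * k = n then 1 / 2 else 1) * (of_nat (r choose (n - k)) + of_nat (r choose k))" for r
  define g :: "nat \<Rightarrow> nat \<Rightarrow> nat \<Rightarrow> complex" where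
    "g r a e = (if e = 0 then if a + r = n then h r else 0 else 0)" for r a e
  have lookup_Dx: "Poly_Mapping.lookup (Dx ((Dx ^^ r) (dv (U 0) * dv (U a) * dv (Ubar e))))
      (cubic_mon n k) = g (Suc r) a e" for r a e
    unfolding g_def h_def by (rule lookup_Dx_Dx_funpow_cubic_mon[OF assms(2)])
  have "Poly_Mapping.lookup (Dx (varderiv_upto N (dv (U 0) * Y_cubic n))) (cubic_mon n k) =
      (\<Sum>a\<le>n. \<Sum>b\<le>n. \<Sum>e\<le>n. cubic_coeff n a b e * ((-1) ^ b * g (Suc b) a e)) +
      (\<Sum>a\<le>n. \<Sum>b\<le>n. \<Sum>e\<le>n. cubic_coeff n a b e * ((-1) ^ e * g (Suc e) a b))"
    using assms(1)
    by (simp add: varderiv_upto_U0_Y_cubic Dx_sum Dx_add Dx_dconst_mult lookup_sum lookup_add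
        lookup_dconst_mult lookup_Dx distrib_left sum.distrib del: funpow.simps)
  also have "(\<Sum>a\<le>n. \<Sum>b\<le>n. \<Sum>e\<le>n. cubic_coeff n a b e * ((-1) ^ e * g (Suc e) a b)) =
      (\<Sum>a\<le>n. \<Sum>b\<le>n. \<Sum>e\<le>n. cubic_coeff n a b e * ((-1) ^ b * g (Suc b) a e))"
    by (rule sum.cong[OF refl], subst sum.swap) (simp add: cubic_coeff_swap)
  also have "(\<Sum>a\<le>n. \<Sum>b\<le>n. \<Sum>e\<le>n. cubic_coeff n a b e * ((-1) ^ b * g (Suc b) a e)) =
      (\<Sum>a\<le>n. \<Sum>b\<le>n. if a + b + 1 = n
        then (1 / (2 * \<i>)) ^ (n + 2) * of_nat (n choose b) * (-1) ^ b * h (Suc b) else 0)"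
    by (simp add: g_def cubic_coeff_Ubar0 if_distrib[of "\<lambda>t. _ * t"] sum.delta mult_ac cong: if_cong)
  also have "\<dots> = (\<Sum>b<n. (1 / (2 * \<i>)) ^ (n + 2) * of_nat (n choose b) * (-1) ^ b * h (Suc b))"
    by (rule sum_atMost_if_add_Suc_eq)
  also have "\<dots> = (\<Sum>b<n. ((if 2 * k = n then 1 / 2 else 1) * (1 / (2 * \<i>)) ^ (n + 2)) *
      ((-1) ^ b * of_nat (n choose b) * (of_nat (Suc b choose (n - k)) + of_nat (Suc b choose k))))"
    by (intro sum.cong refl) (simp add: h_def mult_ac)
  finally show ?thesis
    by (simp only: sum_distrib_left[symmetric] mult_2[symmetric] mult.assoc)
qed

theorem proposition2p5:
  fixes \<alpha> :: complex and n k :: nat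
  assumes "n \<ge> 1" and "k \<le> n"
  shows "Poly_Mapping.lookup (rhs \<alpha> n) (cubic_mon n k) =
    (if 2 * k = n then 1 / 2 else 1) *
    (4 * (-1) ^ (n + 1) * \<alpha> / (2 * \<i>) ^ (n + 2) *
      (of_nat ((n + 2) choose (k + 1)) - (if k = 0 then 1 else 0) - (if k = n then 1 else 0)))"
proof -
  define N where "N = maxord (dv (U 0) * Y n)"
  define B :: complex where
    "B = of_nat ((n + 2) choose (k + 1)) - (if k = 0 then 1 else 0) - (if k = n then 1 else 0)"
  have "n \<le> N"
    unfolding N_def by (rule maxord_U0_mult_Y)
  have "Poly_Mapping.lookup (rhs \<alpha> n) (cubic_mon n k) =
      2 * \<alpha> * Poly_Mapping.lookup (Dx (varderiv_upto N (dv (U 0) * Y n))) (cubic_mon n k)"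
    unfolding rhs_def varderiv_ubar_eq_upto N_def lookup_dconst_mult ..
  also have "dv (U 0) * Y n =
      dv (U 0) * Y_lin n + dv (U 0) * Y_cubic n + dv (U 0) * (Y n - Y_lin n - Y_cubic n)"
    by (simp add: algebra_simps)
  also have "Poly_Mapping.lookup (Dx (varderiv_upto N \<dots>)) (cubic_mon n k) =
      2 * (if 2 * k = n then 1 / 2 else 1) * (1 / (2 * \<i>)) ^ (n + 2) *
        (\<Sum>b<n. (-1) ^ b * of_nat (n choose b) *
          (of_nat (Suc b choose (n - k)) + of_nat (Suc b choose k)))"
    using \<open>n \<le> N\<close> assms(2)
    by (simp only: varderiv_upto_add Dx_add lookup_add lookup_Dx_varderiv_Y_lin
        lookup_Dx_varderiv_Y_cubic lookup_Dx_varderiv_Y_higher add_0_left add_0_right)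
  also have "(\<Sum>b<n. (-1) ^ b * of_nat (n choose b) *
      (of_nat (Suc b choose (n - k)) + of_nat (Suc b choose k))) = (-1) ^ (n + 1) * B"
    unfolding B_def by (rule alternating_binomial_identity[OF assms(2)])
  finally show ?thesis
    unfolding B_def[symmetric] power_one_over by (simp add: field_simps)
qed

end
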